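(* Let $K$ be a convex body in $\mathbb{R}^d$, let $x$ be a regular boundary point of $K$ with exterior normal unit vector $\xi$, and let $U$ be an open neighborhood of the set $-S(K,-\xi)+x$. Then there is an open neighborhood $V$ of $x$ such that for every $t\in\mathbb{R}^d\setminus\Delta(K)$, if $K+t$ intersects $V$ then $t\in U$.
   Context: A convex body is a compact convex set with nonempty interior. A boundary point is regular if $K$ has a unique support hyperplane there; its exterior normal unit vector $\xi$ satisfies $K\subset\{z:\langle z,\xi\rangle\le\langle x,\xi\rangle\}$. For a unit vector $\eta$, $S(K,\eta)=K\cap H(K,\eta)$, where $H(K,\eta)$ is the support hyperplane of $K$ with exterior normal $\eta$ (i.e. $S(K,\eta)$ is the set of maximizers of $\langle\cdot,\eta\rangle$ on $K$). $\Delta(K)=\{y: m(K\cap(K+y))>0\}$, $m$ Lebesgue measure. *)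

theory Defs
  imports "HOL-Analysis.Analysis"
begin

definition convex_body :: "'a::euclidean_space set \<Rightarrow> bool" where
  "convex_body K \<longleftrightarrow> compact K \<and> convex K \<and> interior K \<noteq> {}"

definition exterior_unit_normal :: "'a::euclidean_space set \<Rightarrow> 'a \<Rightarrow> 'a \<Rightarrow> bool" where
  "exterior_unit_normal K x xi \<longleftrightarrow> norm xi = 1 \<and> (\<forall>z\<in>K. z \<bullet> xi \<le> x \<bullet> xi)"

definition regular_boundary_point :: "'a::euclidean_space set \<Rightarrow> 'a \<Rightarrow> bool" where
  "regular_boundary_point K x \<longleftrightarrow> x \<in> frontier K \<and> (\<exists>!xi. exterior_unit_normal K x xi)"

definition support_set :: "'a::euclidean_space set \<Rightarrow> 'a \<Rightarrow> 'a set" where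
  "support_set K eta = {y \<in> K. \<forall>z\<in>K. z \<bullet> eta \<le> y \<bullet> eta}"

definition Delta :: "'a::euclidean_space set \<Rightarrow> 'a set" where
  "Delta K = {y. emeasure lebesgue (K \<inter> ((\<lambda>z. z + y) ` K)) > 0}"

end

theory Submission
  imports Defs
begin

text \<open>For t \<notin> \<Delta>(K) the bodies K and K + t have disjoint interiors, so some
  hyperplane with unit normal \<eta> separates them. Such "separating translations" form a
  closed set T (the normals range over the compact unit sphere), hence
  A = (T - U) + K is closed. If x = k + t were in A, then x would be a common point of
  K and K + t at which \<eta> is an exterior normal, so \<eta> = \<xi> by regularity, k would
  lie in S(K,-\<xi>), and t = x - k \<in> U. So V = -A is an open neighbourhood of x.\<close>

lemma interior_inter_translation_empty_if_notin_Delta: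
  fixes K :: "'a::euclidean_space set"
  assumes "convex K" "closed K" "t \<notin> Delta K"
  shows "interior (K \<inter> (\<lambda>z. z + t) ` K) = {}"
proof -
  have closed_translate: "closed ((\<lambda>z. z + t) ` K)"
    using closed_translation[OF \<open>closed K\<close>, of t] by (simp add: add.commute)
  have convex_translate: "convex ((\<lambda>z. z + t) ` K)"
    using convex_translation[OF \<open>convex K\<close>, of t] by (simp add: add.commute)
  have "K \<inter> (\<lambda>z. z + t) ` K \<in> sets lebesgue"
    using assms(2) closed_translate by (intro sets_completionI_sets sets.Int) (simp_all add: borel_closed)
  moreover have "emeasure lebesgue (K \<inter> (\<lambda>z. z + t) ` K) = 0"
    using \<open>t \<notin> Delta K\<close> by (simp add: Delta_def)
  ultimately have "negligible (K \<inter> (\<lambda>z. z + t) ` K)"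
    by (simp add: negligible_iff_emeasure0)
  then show ?thesis
    using negligible_convex_interior convex_Int[OF \<open>convex K\<close> convex_translate] by blast
qed

lemma separating_unit_normal_if_interiors_disjoint:
  fixes K L :: "'a::euclidean_space set"
  assumes "convex K" "closed K" "interior K \<noteq> {}"
    and "convex L" "closed L" "interior L \<noteq> {}"
    and "interior K \<inter> interior L = {}"
  obtains \<eta> where "norm \<eta> = 1" "\<And>z w. z \<in> K \<Longrightarrow> w \<in> L \<Longrightarrow> z \<bullet> \<eta> \<le> w \<bullet> \<eta>"
proof -
  obtain a b where "a \<noteq> 0" and a_le: "\<forall>z\<in>interior K. a \<bullet> z \<le> b"
    and a_ge: "\<forall>w\<in>interior L. b \<le> a \<bullet> w"
    using separating_hyperplane_sets[OF convex_interior convex_interior] assms by metis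
  have "closure (interior K) = K" "closure (interior L) = L"
    using assms by (simp_all add: convex_closure_interior closure_closed)
  then have "K \<subseteq> {z. a \<bullet> z \<le> b}" "L \<subseteq> {w. b \<le> a \<bullet> w}"
    using closure_minimal[OF _ closed_halfspace_le] closure_minimal[OF _ closed_halfspace_ge]
      a_le a_ge
    by (metis mem_Collect_eq subsetI)+
  then have "z \<bullet> (a /\<^sub>R norm a) \<le> w \<bullet> (a /\<^sub>R norm a)" if "z \<in> K" "w \<in> L" for z w
    using that \<open>a \<noteq> 0\<close> by (force simp: inner_commute divide_right_mono)
  moreover have "norm (a /\<^sub>R norm a) = 1"
    using \<open>a \<noteq> 0\<close> by simp
  ultimately show thesis
    using that by blast
qed

definition separating_translations :: "'a::euclidean_space set \<Rightarrow> 'a set" where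
  "separating_translations K =
     {t. \<exists>\<eta>. norm \<eta> = 1 \<and> (\<forall>z\<in>K. \<forall>w\<in>K. z \<bullet> \<eta> \<le> (w + t) \<bullet> \<eta>)}"

lemma closed_separating_translations: "closed (separating_translations K)"
proof -
  have "{p :: 'a \<times> 'a. \<forall>z\<in>K. \<forall>w\<in>K. z \<bullet> fst p \<le> (w + snd p) \<bullet> fst p}
          = (\<Inter>z\<in>K. \<Inter>w\<in>K. {p. z \<bullet> fst p \<le> (w + snd p) \<bullet> fst p})"
    by auto
  also have "closed \<dots>"
    by (intro closed_INT closed_Collect_le continuous_intros ballI)
  finally have "closed {p :: 'a \<times> 'a. \<forall>z\<in>K. \<forall>w\<in>K. z \<bullet> fst p \<le> (w + snd p) \<bullet> fst p}" .
  then have "closed {t. \<exists>\<eta>. \<eta> \<in> sphere 0 1 \<and>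
                 (\<eta>, t) \<in> {p. \<forall>z\<in>K. \<forall>w\<in>K. z \<bullet> fst p \<le> (w + snd p) \<bullet> fst p}}"
    by (intro closed_compact_projection) auto
  then show ?thesis
    by (simp add: separating_translations_def)
qed

lemma separating_translation_if_notin_Delta:
  assumes "convex_body K" "t \<notin> Delta K"
  shows "t \<in> separating_translations K"
proof -
  have K: "convex K" "closed K" "interior K \<noteq> {}"
    using assms(1) by (auto simp: convex_body_def compact_imp_closed)
  have "(\<lambda>z. z + t) ` K = (+) t ` K"
    by (simp add: add.commute)
  then have K_t: "convex ((\<lambda>z. z + t) ` K)" "closed ((\<lambda>z. z + t) ` K)"
    "interior ((\<lambda>z. z + t) ` K) \<noteq> {}"
    using K by (simp_all add: convex_translation closed_translation interior_translation)
  have "interior K \<inter> interior ((\<lambda>z. z + t) ` K) = {}"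
    using interior_inter_translation_empty_if_notin_Delta[OF K(1,2) assms(2)]
    by (simp add: interior_Int)
  then obtain \<eta> where "norm \<eta> = 1" "\<And>z w. z \<in> K \<Longrightarrow> w \<in> (\<lambda>z. z + t) ` K \<Longrightarrow> z \<bullet> \<eta> \<le> w \<bullet> \<eta>"
    using separating_unit_normal_if_interiors_disjoint[OF K K_t] by blast
  then show ?thesis
    unfolding separating_translations_def by blast
qed

lemma separating_translation_common_point:
  assumes "norm \<eta> = 1" "\<forall>z\<in>K. \<forall>w\<in>K. z \<bullet> \<eta> \<le> (w + t) \<bullet> \<eta>"
    and "k \<in> K" "k + t \<in> K"
  shows "exterior_unit_normal K (k + t) \<eta>" "k \<in> support_set K (- \<eta>)"
  using assms by (auto simp: exterior_unit_normal_def support_set_def inner_add_left)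

theorem lemma4p3:
  fixes K :: "'a::euclidean_space set" and x xi :: 'a and U :: "'a set"
  assumes "convex_body K"
    and "regular_boundary_point K x"
    and "exterior_unit_normal K x xi"
    and "open U"
    and "(\<lambda>s. x - s) ` support_set K (- xi) \<subseteq> U"
  shows "\<exists>V. open V \<and> x \<in> V \<and>
           (\<forall>t. t \<notin> Delta K \<longrightarrow> ((\<lambda>z. z + t) ` K) \<inter> V \<noteq> {} \<longrightarrow> t \<in> U)"
proof -
  have "compact K"
    using assms(1) by (simp add: convex_body_def)
  define A where "A = (\<Union>t \<in> separating_translations K - U. \<Union>k \<in> K. {t + k})"
  have "closed A"
    unfolding A_def using \<open>compact K\<close> \<open>open U\<close>
    by (intro closed_compact_sums closed_Diff closed_separating_translations)
  moreover have "x \<notin> A"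
  proof
    assume "x \<in> A"
    then obtain t k \<eta> where "t \<notin> U" "k \<in> K" "x = k + t" "norm \<eta> = 1"
      and separates: "\<forall>z\<in>K. \<forall>w\<in>K. z \<bullet> \<eta> \<le> (w + t) \<bullet> \<eta>"
      by (auto simp: A_def separating_translations_def add.commute)
    moreover have "x \<in> K"
      using assms(1,2) frontier_subset_closed compact_imp_closed
      by (auto simp: convex_body_def regular_boundary_point_def)
    ultimately have "exterior_unit_normal K x \<eta>" "k \<in> support_set K (- \<eta>)"
      using separating_translation_common_point by metis+
    with assms(2,3) have "k \<in> support_set K (- xi)"
      by (metis regular_boundary_point_def)
    then show False
      using assms(5) \<open>t \<notin> U\<close> \<open>x = k + t\<close> by force
  qed
  moreover have "t \<in> U" if "t \<notin> Delta K" "(\<lambda>z. z + t) ` K \<inter> - A \<noteq> {}" for t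
    using that separating_translation_if_notin_Delta[OF assms(1)] by (force simp: A_def add.commute)
  ultimately show ?thesis
    by (intro exI[of _ "- A"]) (auto simp: open_Compl)
qed

end
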